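(* Let $\varphi:\mathbb{C}^n\to\mathbb{R}$ be $C^2$ and $A=\nabla^\perp\varphi$. Then for every $f\in C^2_c(\mathbb{C}^n)$, $$\sum_{j=1}^n\int_{\mathbb{C}^n}\Big|\frac{\partial(e^{\varphi}f)}{\partial\bar z_j}\Big|^2e^{-2\varphi}=\frac14\int_{\mathbb{C}^n}|\nabla_Af|^2-\frac14\int_{\mathbb{C}^n}\Delta\varphi\,|f|^2.$$
   Context: Identify $\mathbb{C}^n$ with $\mathbb{R}^{2n}$ via $z_j=x_j+iy_j$, coordinates ordered $(x_1,y_1,\dots,x_n,y_n)$; $\Delta$ is the Euclidean Laplacian. $\nabla^\perp\varphi=(-\partial_{y_1}\varphi,\partial_{x_1}\varphi,\dots,-\partial_{y_n}\varphi,\partial_{x_n}\varphi)$. For $A:\mathbb{R}^{2n}\to\mathbb{R}^{2n}$, $|\nabla_Af|^2=\sum_{k=1}^{2n}|(\partial_k-iA_k)f|^2$; here this equals $\sum_{j=1}^n(|(\partial_{x_j}+i\partial_{y_j}\varphi)f|^2+|(\partial_{y_j}-i\partial_{x_j}\varphi)f|^2)$. Integrals are with respect to Lebesgue measure. *)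

theory Defs
  imports "HOL-Analysis.Analysis"
begin

text \<open>Points of C^n are vectors of type complex^'n; the real coordinates of z are
  x_j = Re (z$j), y_j = Im (z$j). The real directions are axis j 1 (for x_j)
  and axis j ii (for y_j). lborel on complex^'n is Lebesgue measure on R^(2n).\<close>

definition pd :: "('a::real_normed_vector \<Rightarrow> 'b::real_normed_vector) \<Rightarrow> 'a \<Rightarrow> 'a \<Rightarrow> 'b" where
  "pd f v z = frechet_derivative f (at z) v"

definition dx :: "'n::finite \<Rightarrow> complex^'n" where "dx j = axis j 1"
definition dy :: "'n::finite \<Rightarrow> complex^'n" where "dy j = axis j \<i>"

definition C2 :: "(complex^'n::finite \<Rightarrow> 'b::real_normed_vector) \<Rightarrow> bool" where
  "C2 f \<longleftrightarrow> (\<forall>z. f differentiable (at z)) \<and>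
     (\<forall>v z. (\<lambda>w. pd f v w) differentiable (at z)) \<and>
     (\<forall>v u. continuous_on UNIV (\<lambda>w. pd (\<lambda>w'. pd f v w') u w))"

definition has_compact_support :: "('a::real_normed_vector \<Rightarrow> 'b::zero) \<Rightarrow> bool" where
  "has_compact_support f \<longleftrightarrow> compact (closure {z. f z \<noteq> 0})"

definition dbar :: "'n::finite \<Rightarrow> (complex^'n \<Rightarrow> complex) \<Rightarrow> complex^'n \<Rightarrow> complex" where
  "dbar j g z = (pd g (dx j) z + \<i> * pd g (dy j) z) / 2"

text \<open>nabla-perp phi, stored as a complex vector: component j has real part
  A_{x_j} = - d phi/dy_j and imaginary part A_{y_j} = d phi/dx_j.\<close>
definition nabla_perp :: "(complex^'n::finite \<Rightarrow> real) \<Rightarrow> complex^'n \<Rightarrow> complex^'n" where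
  "nabla_perp \<phi> z = (\<chi> j. Complex (- pd \<phi> (dy j) z) (pd \<phi> (dx j) z))"

definition mag_grad_sq :: "(complex^'n::finite \<Rightarrow> complex^'n) \<Rightarrow> (complex^'n \<Rightarrow> complex) \<Rightarrow> complex^'n \<Rightarrow> real" where
  "mag_grad_sq A f z = (\<Sum>j\<in>UNIV.
      (cmod (pd f (dx j) z - \<i> * of_real (Re (A z $ j)) * f z))\<^sup>2 +
      (cmod (pd f (dy j) z - \<i> * of_real (Im (A z $ j)) * f z))\<^sup>2)"

definition laplacian :: "(complex^'n::finite \<Rightarrow> real) \<Rightarrow> complex^'n \<Rightarrow> real" where
  "laplacian \<phi> z = (\<Sum>j\<in>UNIV. pd (\<lambda>w. pd \<phi> (dx j) w) (dx j) z + pd (\<lambda>w. pd \<phi> (dy j) w) (dy j) z)"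

end

theory Submission
  imports Defs
begin

text \<open>Write \<open>g\<^sub>v\<close> for the derivative of \<open>g\<close> in the real direction \<open>v\<close> and
  \<open>(X, Y) = (x\<^sub>j, y\<^sub>j)\<close>. Since \<open>(e\<^sup>\<phi> f)\<^sub>v = e\<^sup>\<phi> (f\<^sub>v + \<phi>\<^sub>v f)\<close>, expanding the square
  pointwise gives
  \<open>|\<partial>(e\<^sup>\<phi> f)/\<partial>z\<^sub>j|\<^sup>2 e\<^sup>-\<^sup>2\<^sup>\<phi> = |\<nabla>\<^sub>A f|\<^sup>2\<^sub>j / 4 + Im (f\<^sub>X cnj f\<^sub>Y) / 2 + (\<phi>\<^sub>X Re (f\<^sub>X cnj f) + \<phi>\<^sub>Y Re (f\<^sub>Y cnj f)) / 2\<close>,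
  where \<open>|\<nabla>\<^sub>A f|\<^sup>2\<^sub>j\<close> collects the two terms of \<open>|\<nabla>\<^sub>A f|\<^sup>2\<close> belonging to \<open>z\<^sub>j\<close>.
  Integrating by parts twice, \<open>\<integral> f\<^sub>X cnj f\<^sub>Y = \<integral> f\<^sub>Y cnj f\<^sub>X\<close> because mixed partials commute,
  so the first cross term integrates to zero; and \<open>Re (f\<^sub>v cnj f) = (|f|\<^sup>2)\<^sub>v / 2\<close> turns the
  remaining ones into \<open>-\<integral> (\<phi>\<^sub>X\<^sub>X + \<phi>\<^sub>Y\<^sub>Y) |f|\<^sup>2 / 4\<close>. Integration by parts for compactly
  supported \<open>C\<^sup>1\<close> functions comes from translation invariance of Lebesgue measure:
  difference quotients of \<open>u\<close> integrate to zero and converge to \<open>u\<^sub>v\<close> dominatedly.\<close>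

lemma pd_has_derivative:
  "f differentiable (at z) \<Longrightarrow> (f has_derivative (\<lambda>v. pd f v z)) (at z)"
  unfolding pd_def by (simp add: frechet_derivative_works[symmetric])

lemma pd_eqI: "(f has_derivative F) (at z) \<Longrightarrow> pd f v z = F v"
  unfolding pd_def using frechet_derivative_at by metis

lemma has_vector_derivative_pd_line:
  assumes "f differentiable (at (z + s *\<^sub>R v))"
  shows "((\<lambda>t. f (z + t *\<^sub>R v)) has_vector_derivative pd f v (z + s *\<^sub>R v)) (at s within S)"
proof -
  have line: "((\<lambda>t. z + t *\<^sub>R v) has_derivative (\<lambda>t. t *\<^sub>R v)) (at s within S)"
    by (auto intro!: derivative_eq_intros)
  have "(f has_derivative (\<lambda>w. pd f w (z + s *\<^sub>R v))) (at (z + s *\<^sub>R v) within ((\<lambda>t. z + t *\<^sub>R v) ` S))"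
    using pd_has_derivative[OF assms] has_derivative_at_withinI by blast
  from diff_chain_within[OF line this]
  have "((\<lambda>t. f (z + t *\<^sub>R v)) has_derivative (\<lambda>t. pd f (t *\<^sub>R v) (z + s *\<^sub>R v))) (at s within S)"
    by (simp add: o_def)
  moreover have "pd f (t *\<^sub>R v) (z + s *\<^sub>R v) = t *\<^sub>R pd f v (z + s *\<^sub>R v)" for t
    using linear_scale[OF has_derivative_linear[OF pd_has_derivative[OF assms]]] .
  ultimately show ?thesis unfolding has_vector_derivative_def by simp
qed

lemma pd_eq_0_outside_ball:
  assumes "\<And>w. norm w > R \<Longrightarrow> g w = 0" and "norm w > R"
  shows "pd g v w = 0"
proof -
  have "((\<lambda>_. 0) has_derivative (\<lambda>h. 0)) (at w)" by simp
  then have "(g has_derivative (\<lambda>h. 0)) (at w)"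
    by (rule has_derivative_transform_within_open[where s = "{w. norm w > R}"])
       (use assms in \<open>auto intro: open_Collect_less continuous_intros\<close>)
  then show ?thesis by (rule pd_eqI)
qed

lemma pd_exp_mult:
  fixes \<phi> :: "'a::real_normed_vector \<Rightarrow> real" and f :: "'a \<Rightarrow> complex"
  assumes "\<phi> differentiable (at z)" "f differentiable (at z)"
  shows "pd (\<lambda>w. of_real (exp (\<phi> w)) * f w) v z
     = of_real (exp (\<phi> z)) * (of_real (pd \<phi> v z) * f z + pd f v z)"
proof -
  have "((\<lambda>w. of_real (exp (\<phi> w)) * f w) has_derivative
      (\<lambda>h. of_real (exp (\<phi> z)) * pd f h z + of_real (exp (\<phi> z) * pd \<phi> h z) * f z)) (at z)"
    using pd_has_derivative[OF assms(1)] pd_has_derivative[OF assms(2)]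
    by (auto intro!: derivative_eq_intros)
  then show ?thesis by (simp add: pd_eqI algebra_simps)
qed

lemma mvt_linear_approx:
  fixes h :: "real \<Rightarrow> 'b::real_normed_vector"
  assumes "0 \<le> t"
    and "\<And>s. s \<in> {0..t} \<Longrightarrow> (h has_vector_derivative h' s) (at s within {0..t})"
    and "\<And>s. s \<in> {0..t} \<Longrightarrow> norm (h' s - c) \<le> B"
  shows "norm (h t - h 0 - t *\<^sub>R c) \<le> B * t"
proof -
  define g where "g s = h s - s *\<^sub>R c" for s
  have "\<And>s. s \<in> {0..t} \<Longrightarrow> (g has_derivative (\<lambda>x. x *\<^sub>R (h' s - c))) (at s within {0..t})"
    unfolding g_def using assms(2)[unfolded has_vector_derivative_def]
    by (auto intro!: derivative_eq_intros simp: scaleR_diff_right)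
  moreover have "\<And>s. s \<in> {0..t} \<Longrightarrow> onorm (\<lambda>x. x *\<^sub>R (h' s - c)) \<le> B"
    using assms(3) by (subst onorm_scaleR_left) (auto simp: onorm_id)
  ultimately have "norm (g t - g 0) \<le> B * norm (t - 0)"
    using assms(1) by (intro differentiable_bound[of "{0..t}" g]) auto
  then show ?thesis using assms(1) by (simp add: g_def algebra_simps)
qed

subsection \<open>Symmetry of mixed partial derivatives\<close>

lemma second_difference_approx:
  fixes f :: "'a::real_normed_vector \<Rightarrow> 'b::real_normed_vector"
  assumes df: "\<And>w. f differentiable (at w)"
    and dfX: "\<And>w. pd f X differentiable (at w)"
    and cont: "continuous (at z) (pd (pd f X) Y)"
    and "e > 0"
  shows "\<exists>d>0. \<forall>t. 0 < t \<and> t < d \<longrightarrow>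
     norm (f (z + t *\<^sub>R X + t *\<^sub>R Y) - f (z + t *\<^sub>R X) - f (z + t *\<^sub>R Y) + f z
           - (t * t) *\<^sub>R pd (pd f X) Y z) \<le> e * (t * t)"
proof -
  define fXY where "fXY = pd (pd f X) Y"
  from cont \<open>e > 0\<close> obtain d0 where d0: "d0 > 0" "\<And>w. dist w z < d0 \<Longrightarrow> dist (fXY w) (fXY z) < e"
    unfolding continuous_at_eps_delta fXY_def by blast
  define N where "N = norm X + norm Y + 1"
  have N: "N > 0" by (simp add: N_def add_nonneg_pos)
  have close: "norm (fXY (z + s *\<^sub>R X + r *\<^sub>R Y) - fXY z) \<le> e"
    if "s \<in> {0..t}" "r \<in> {0..t}" "t < d0 / N" for s r t
  proof -
    have "norm (s *\<^sub>R X + r *\<^sub>R Y) \<le> s * norm X + r * norm Y"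
      using that by (auto intro!: order_trans[OF norm_triangle_ineq])
    also have "\<dots> \<le> t * N"
      using that mult_right_mono[of s t "norm X"] mult_right_mono[of r t "norm Y"]
      by (auto simp: N_def distrib_left)
    also have "\<dots> < d0" using that N by (simp add: pos_less_divide_eq)
    finally show ?thesis using d0(2)[of "z + s *\<^sub>R X + r *\<^sub>R Y"] by (simp add: dist_norm)
  qed
  show ?thesis
  proof (intro exI[of _ "d0 / N"] conjI allI impI)
    show "d0 / N > 0" using d0 N by simp
    fix t :: real assume t: "0 < t \<and> t < d0 / N"
    have inner: "norm (pd f X (z + s *\<^sub>R X + t *\<^sub>R Y) - pd f X (z + s *\<^sub>R X) - t *\<^sub>R fXY z) \<le> e * t"
      if s: "s \<in> {0..t}" for s
      using mvt_linear_approx[where h = "\<lambda>r. pd f X (z + s *\<^sub>R X + r *\<^sub>R Y)"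
          and h' = "\<lambda>r. fXY (z + s *\<^sub>R X + r *\<^sub>R Y)"] t close[OF s] dfX
      by (simp add: fXY_def has_vector_derivative_pd_line)
    define g where "g s = f ((z + t *\<^sub>R Y) + s *\<^sub>R X) - f (z + s *\<^sub>R X)" for s
    have "norm (g t - g 0 - t *\<^sub>R (t *\<^sub>R fXY z)) \<le> (e * t) * t"
    proof (rule mvt_linear_approx[where h' = "\<lambda>s. pd f X ((z + t *\<^sub>R Y) + s *\<^sub>R X) - pd f X (z + s *\<^sub>R X)"])
      show "(g has_vector_derivative pd f X ((z + t *\<^sub>R Y) + s *\<^sub>R X) - pd f X (z + s *\<^sub>R X)) (at s within {0..t})" for s
        unfolding g_def by (intro has_vector_derivative_diff has_vector_derivative_pd_line df)
      show "norm (pd f X ((z + t *\<^sub>R Y) + s *\<^sub>R X) - pd f X (z + s *\<^sub>R X) - t *\<^sub>R fXY z) \<le> e * t"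
        if "s \<in> {0..t}" for s
        using inner[OF that] by (simp add: algebra_simps)
    qed (use t in simp)
    then show "norm (f (z + t *\<^sub>R X + t *\<^sub>R Y) - f (z + t *\<^sub>R X) - f (z + t *\<^sub>R Y) + f z
           - (t * t) *\<^sub>R pd (pd f X) Y z) \<le> e * (t * t)"
      by (simp add: g_def fXY_def algebra_simps)
  qed
qed

lemma pd_pd_commute:
  fixes f :: "'a::real_normed_vector \<Rightarrow> 'b::real_normed_vector"
  assumes df: "\<And>w. f differentiable (at w)"
    and dfX: "\<And>w. pd f X differentiable (at w)"
    and dfY: "\<And>w. pd f Y differentiable (at w)"
    and "continuous (at z) (pd (pd f X) Y)"
    and "continuous (at z) (pd (pd f Y) X)"
  shows "pd (pd f X) Y z = pd (pd f Y) X z"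
proof -
  let ?a = "pd (pd f X) Y z" and ?b = "pd (pd f Y) X z"
  have close: "norm (?a - ?b) \<le> 2 * e" if e: "e > 0" for e
  proof -
    obtain d1 where d1: "d1 > 0" "\<And>t. 0 < t \<and> t < d1 \<Longrightarrow>
        norm (f (z + t *\<^sub>R X + t *\<^sub>R Y) - f (z + t *\<^sub>R X) - f (z + t *\<^sub>R Y) + f z
           - (t * t) *\<^sub>R ?a) \<le> e * (t * t)"
      using second_difference_approx[OF df dfX assms(4) e] by blast
    obtain d2 where d2: "d2 > 0" "\<And>t. 0 < t \<and> t < d2 \<Longrightarrow>
        norm (f (z + t *\<^sub>R Y + t *\<^sub>R X) - f (z + t *\<^sub>R Y) - f (z + t *\<^sub>R X) + f z
           - (t * t) *\<^sub>R ?b) \<le> e * (t * t)"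
      using second_difference_approx[OF df dfY assms(5) e] by blast
    define t where "t = min d1 d2 / 2"
    have t: "0 < t" "t < d1" "t < d2" using d1 d2 by (auto simp: t_def)
    define D where "D = f (z + t *\<^sub>R X + t *\<^sub>R Y) - f (z + t *\<^sub>R X) - f (z + t *\<^sub>R Y) + f z"
    have "norm (D - (t * t) *\<^sub>R ?a) \<le> e * (t * t)" "norm (D - (t * t) *\<^sub>R ?b) \<le> e * (t * t)"
      using d1(2)[of t] d2(2)[of t] t by (simp_all add: D_def algebra_simps)
    moreover have "norm ((t * t) *\<^sub>R (?a - ?b)) \<le> norm (D - (t * t) *\<^sub>R ?b) + norm (D - (t * t) *\<^sub>R ?a)"
      using norm_triangle_ineq4[of "D - (t * t) *\<^sub>R ?b" "D - (t * t) *\<^sub>R ?a"]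
      by (simp add: scaleR_diff_right)
    moreover have "norm ((t * t) *\<^sub>R (?a - ?b)) = (t * t) * norm (?a - ?b)"
      by simp
    ultimately have "(t * t) * norm (?a - ?b) \<le> (t * t) * (2 * e)"
      by argo
    then show ?thesis using t by simp
  qed
  have "norm (?a - ?b) = 0"
    using close[of "norm (?a - ?b) / 4"] by (cases "norm (?a - ?b) = 0") auto
  then show ?thesis by simp
qed

subsection \<open>Integrals of compactly supported functions\<close>

lemma has_compact_support_obtain_radius:
  assumes "has_compact_support f"
  obtains R where "\<And>w. norm w > R \<Longrightarrow> f w = 0"
proof -
  from assms obtain R where "\<forall>x\<in>closure {z. f z \<noteq> 0}. norm x \<le> R"
    unfolding has_compact_support_def using compact_imp_bounded bounded_iff by metis
  then have "f w = 0" if "norm w > R" for w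
    using that closure_subset[of "{z. f z \<noteq> 0}"] by force
  then show ?thesis using that by blast
qed

lemma integrable_vanishing_outside_ball:
  fixes g :: "'a::euclidean_space \<Rightarrow> 'b::{banach, second_countable_topology}"
  assumes "continuous_on UNIV g" and "\<And>w. norm w > R \<Longrightarrow> g w = 0"
  shows "integrable lborel g"
proof -
  have "integrable lborel (\<lambda>x. indicator (cball 0 R) x *\<^sub>R g x)"
    by (rule borel_integrable_compact) (auto intro: continuous_on_subset[OF assms(1)])
  moreover have "(\<lambda>x. indicator (cball 0 R) x *\<^sub>R g x) = g"
    using assms(2) by (auto simp: indicator_def fun_eq_iff)
  ultimately show ?thesis by simp
qed

lemma lborel_integral_translate:
  fixes g :: "'a::euclidean_space \<Rightarrow> 'b::{banach, second_countable_topology}"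
  assumes "g \<in> borel_measurable borel"
  shows "integral\<^sup>L lborel (\<lambda>z. g (z + c)) = integral\<^sup>L lborel g"
proof -
  have "integral\<^sup>L lborel g = integral\<^sup>L (distr lborel borel ((+) c)) g"
    by (simp add: lborel_distr_plus)
  also have "\<dots> = integral\<^sup>L lborel (\<lambda>z. g (c + z))"
    by (rule integral_distr) (auto intro: assms)
  finally show ?thesis by (simp add: add.commute)
qed

lemma difference_quotient_LIMSEQ:
  assumes "u differentiable (at z)"
  shows "(\<lambda>k. real (Suc k) *\<^sub>R (u (z + (1 / real (Suc k)) *\<^sub>R v) - u z)) \<longlonglongrightarrow> pd u v z"
proof -
  define h where "h t = u (z + t *\<^sub>R v)" for t
  have "(h has_vector_derivative pd u v z) (at 0)"
    unfolding h_def using has_vector_derivative_pd_line[of u z 0 v UNIV] assms by simp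
  then have "((\<lambda>t. norm (h t - h 0 - t *\<^sub>R pd u v z) / norm t) \<longlongrightarrow> 0) (at 0)"
    unfolding has_vector_derivative_def has_derivative_iff_norm by simp
  moreover have "filterlim (\<lambda>k. 1 / real (Suc k)) (at 0) sequentially"
    unfolding filterlim_at using LIMSEQ_inverse_real_of_nat by (simp add: inverse_eq_divide)
  ultimately have "(\<lambda>k. norm (h (1 / real (Suc k)) - h 0 - (1 / real (Suc k)) *\<^sub>R pd u v z)
      / norm (1 / real (Suc k))) \<longlonglongrightarrow> 0"
    by (rule filterlim_compose)
  moreover have "norm (h (1 / real (Suc k)) - h 0 - (1 / real (Suc k)) *\<^sub>R pd u v z) / norm (1 / real (Suc k))
     = norm (real (Suc k) *\<^sub>R (u (z + (1 / real (Suc k)) *\<^sub>R v) - u z) - pd u v z)" for k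
  proof -
    have "real (Suc k) *\<^sub>R (u (z + (1 / real (Suc k)) *\<^sub>R v) - u z) - pd u v z
       = real (Suc k) *\<^sub>R (h (1 / real (Suc k)) - h 0 - (1 / real (Suc k)) *\<^sub>R pd u v z)"
      by (simp add: h_def scaleR_diff_right)
    then show ?thesis by (simp add: divide_inverse)
  qed
  ultimately show ?thesis
    using Lim_null tendsto_norm_zero_iff by fastforce
qed

lemma norm_diff_le_along_segment:
  assumes "\<And>w. u differentiable (at w)" and "0 \<le> t"
    and "\<And>s. s \<in> {0..t} \<Longrightarrow> norm (pd u v (z + s *\<^sub>R v)) \<le> M"
  shows "norm (u (z + t *\<^sub>R v) - u z) \<le> M * t"
  using mvt_linear_approx[where h = "\<lambda>r. u (z + r *\<^sub>R v)" and h' = "\<lambda>r. pd u v (z + r *\<^sub>R v)" and c = 0]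
    assms by (simp add: has_vector_derivative_pd_line)

lemma shift_vanishing_outside_ball:
  assumes "\<And>w. norm w > R \<Longrightarrow> u w = 0" and "norm z > R + norm v" and "\<bar>t\<bar> \<le> 1"
  shows "u (z + t *\<^sub>R v) = 0"
proof (rule assms(1))
  have "norm (t *\<^sub>R v) \<le> norm v" using assms(3) by (simp add: mult_left_le_one_le)
  then show "norm (z + t *\<^sub>R v) > R" using assms(2) norm_triangle_ineq2[of z "- t *\<^sub>R v"] by simp
qed

lemma norm_difference_quotient_le:
  assumes du: "\<And>w. u differentiable (at w)"
    and M: "\<And>w. w \<in> cball 0 (R + 2 * norm v) \<Longrightarrow> norm (pd u v w) \<le> M"
    and supp: "\<And>w. norm w > R \<Longrightarrow> u w = 0"
  shows "norm (real (Suc k) *\<^sub>R (u (z + (1 / real (Suc k)) *\<^sub>R v) - u z))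
    \<le> M * indicator (cball 0 (R + norm v)) z"
proof (cases "norm z \<le> R + norm v")
  case True
  have "norm (u (z + (1 / real (Suc k)) *\<^sub>R v) - u z) \<le> M * (1 / real (Suc k))"
  proof (rule norm_diff_le_along_segment[OF du])
    fix r assume r: "r \<in> {0..1 / real (Suc k)}"
    then have "r \<le> 1" by (auto intro: order_trans)
    then have "norm (z + r *\<^sub>R v) \<le> R + 2 * norm v"
      using True r norm_triangle_ineq[of z "r *\<^sub>R v"] mult_right_mono[of r 1 "norm v"] by auto
    then show "norm (pd u v (z + r *\<^sub>R v)) \<le> M" using M by simp
  qed simp
  then have "real (Suc k) * norm (u (z + (1 / real (Suc k)) *\<^sub>R v) - u z) \<le> M"
    by (simp add: field_simps)
  then show ?thesis using True by simp
next
  case False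
  then show ?thesis
    using shift_vanishing_outside_ball[where R = R and u = u, OF supp, where z = z and v = v and t = 0]
      shift_vanishing_outside_ball[where R = R and u = u, OF supp, where z = z and v = v and t = "1 / real (Suc k)"]
    by simp
qed

lemma integral_pd_eq_0:
  fixes u :: "'a::euclidean_space \<Rightarrow> 'b::{banach, second_countable_topology}"
  assumes du: "\<And>w. u differentiable (at w)"
    and cont: "continuous_on UNIV (pd u v)"
    and supp: "\<And>w. norm w > R \<Longrightarrow> u w = 0"
  shows "integral\<^sup>L lborel (pd u v) = 0"
proof -
  obtain M where M: "\<And>w. w \<in> cball 0 (R + 2 * norm v) \<Longrightarrow> norm (pd u v w) \<le> M"
    using compact_continuous_image[OF continuous_on_subset[OF cont] compact_cball]
    by (metis compact_imp_bounded bounded_iff image_eqI subset_UNIV)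
  have cont_u: "continuous_on UNIV u"
    using du differentiable_imp_continuous_within continuous_at_imp_continuous_on by blast
  define s where "s k z = real (Suc k) *\<^sub>R (u (z + (1 / real (Suc k)) *\<^sub>R v) - u z)" for k z
  have "integral\<^sup>L lborel (s k) = 0" for k
  proof -
    have "integrable lborel (\<lambda>z. u (z + (1 / real (Suc k)) *\<^sub>R v))"
      by (rule integrable_vanishing_outside_ball[where R = "R + norm v"])
         (auto intro!: continuous_intros continuous_on_compose2[OF cont_u]
           shift_vanishing_outside_ball[where R = R and u = u, OF supp])
    moreover have "integral\<^sup>L lborel (\<lambda>z. u (z + (1 / real (Suc k)) *\<^sub>R v)) = integral\<^sup>L lborel u"
      by (rule lborel_integral_translate) (rule borel_measurable_continuous_onI[OF cont_u])
    ultimately show ?thesis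
      unfolding s_def using integrable_vanishing_outside_ball[OF cont_u supp] by simp
  qed
  moreover have "(\<lambda>k. integral\<^sup>L lborel (s k)) \<longlonglongrightarrow> integral\<^sup>L lborel (pd u v)"
    using difference_quotient_LIMSEQ[OF du] borel_measurable_continuous_onI[OF cont]
      emeasure_lborel_cball_finite norm_difference_quotient_le[OF du M supp]
    by (intro integral_dominated_convergence[where w = "\<lambda>z. M * indicator (cball 0 (R + norm v)) z"])
       (auto simp: s_def intro!: borel_measurable_continuous_onI continuous_intros
         continuous_on_compose2[OF cont_u] integrable_real_indicator)
  ultimately show ?thesis by (simp add: LIMSEQ_const_iff)
qed

lemma integration_by_parts_pd:
  fixes u a b :: "'a::euclidean_space \<Rightarrow> 'b::{banach, second_countable_topology}"
  assumes "\<And>w. u differentiable (at w)" and "\<And>w. pd u v w = a w + b w"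
    and "continuous_on UNIV a" "continuous_on UNIV b"
    and "\<And>w. norm w > R \<Longrightarrow> u w = 0" "\<And>w. norm w > R \<Longrightarrow> a w = 0" "\<And>w. norm w > R \<Longrightarrow> b w = 0"
  shows "integral\<^sup>L lborel a = - integral\<^sup>L lborel b"
proof -
  have pd_u: "pd u v = (\<lambda>w. a w + b w)"
    using assms(2) by (simp add: fun_eq_iff)
  have "integrable lborel a" "integrable lborel b"
    using assms(3-4,6-7) by (auto intro: integrable_vanishing_outside_ball)
  moreover have "integral\<^sup>L lborel (pd u v) = 0"
    by (rule integral_pd_eq_0[OF assms(1) _ assms(5)]) (simp add: pd_u continuous_on_add assms(3,4))
  ultimately show ?thesis by (simp add: pd_u eq_neg_iff_add_eq_0)
qed

lemma C2_D:
  assumes "C2 g"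
  shows "\<And>z. g differentiable (at z)" "\<And>v z. pd g v differentiable (at z)"
    "\<And>v u. continuous_on UNIV (pd (pd g v) u)" "\<And>v. continuous_on UNIV (pd g v)"
    "continuous_on UNIV g"
  using assms unfolding C2_def
  by (auto intro!: differentiable_imp_continuous_on differentiable_at_imp_differentiable_on)

lemma integral_pd_mult_Re_pd_cnj:
  fixes \<phi> :: "complex^'n::finite \<Rightarrow> real" and f :: "complex^'n \<Rightarrow> complex"
  assumes "C2 \<phi>" and "C2 f" and supp: "\<And>w. norm w > R \<Longrightarrow> f w = 0"
  shows "(LINT w|lborel. pd \<phi> v w * Re (pd f v w * cnj (f w)))
       = -1/2 * (LINT w|lborel. pd (pd \<phi> v) v w * (cmod (f w))\<^sup>2)"
proof -
  note P = C2_D[OF assms(1)] and Q = C2_D[OF assms(2)]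
  define u where "u w = pd \<phi> v w * Re (f w * cnj (f w))" for w
  have du: "(u has_derivative (\<lambda>h. pd (pd \<phi> v) h w * Re (f w * cnj (f w))
      + pd \<phi> v w * Re (pd f h w * cnj (f w) + f w * cnj (pd f h w)))) (at w)" for w
    unfolding u_def using pd_has_derivative[OF P(2)[of v w]] pd_has_derivative[OF Q(1)[of w]]
    by (auto intro!: derivative_eq_intros simp: algebra_simps)
  have "pd u v w = pd (pd \<phi> v) v w * (cmod (f w))\<^sup>2 + 2 * (pd \<phi> v w * Re (pd f v w * cnj (f w)))"
    "u differentiable (at w)" for w
    using du[of w] unfolding pd_eqI[OF du] differentiable_def cmod_power2
    by (auto simp: algebra_simps power2_eq_square)
  then have "(LINT w|lborel. pd (pd \<phi> v) v w * (cmod (f w))\<^sup>2)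
      = - (LINT w|lborel. 2 * (pd \<phi> v w * Re (pd f v w * cnj (f w))))"
    using P(3-4) Q(4-5) pd_eq_0_outside_ball[OF supp]
    by (intro integration_by_parts_pd[where R = R and u = u]) (auto intro!: continuous_intros simp: u_def supp)
  then show ?thesis by simp
qed

lemma integral_Im_pd_cnj_pd_eq_0:
  fixes f :: "complex^'n::finite \<Rightarrow> complex"
  assumes "C2 f" and supp: "\<And>w. norm w > R \<Longrightarrow> f w = 0"
  shows "(LINT w|lborel. Im (pd f X w * cnj (pd f Y w))) = 0"
proof -
  note Q = C2_D[OF assms(1)]
  have by_parts: "(LINT w|lborel. pd f A w * cnj (pd f B w)) = - (LINT w|lborel. f w * cnj (pd (pd f B) A w))"
    for A B
  proof -
    define u where "u w = f w * cnj (pd f B w)" for w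
    have du: "(u has_derivative (\<lambda>h. pd f h w * cnj (pd f B w) + f w * cnj (pd (pd f B) h w))) (at w)" for w
      unfolding u_def using pd_has_derivative[OF Q(2)[of B w]] pd_has_derivative[OF Q(1)[of w]]
      by (auto intro!: derivative_eq_intros simp: algebra_simps)
    have "pd u A w = pd f A w * cnj (pd f B w) + f w * cnj (pd (pd f B) A w)"
      "u differentiable (at w)" for w
      using du[of w] unfolding pd_eqI[OF du] differentiable_def by auto
    then show ?thesis
      using Q(3-5) pd_eq_0_outside_ball[OF supp]
      by (intro integration_by_parts_pd[where R = R and u = u]) (auto intro!: continuous_intros simp: u_def supp)
  qed
  have "pd (pd f X) Y w = pd (pd f Y) X w" for w
    using Q by (intro pd_pd_commute) (auto simp: continuous_on_eq_continuous_within)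
  then have "(LINT w|lborel. pd f X w * cnj (pd f Y w)) = (LINT w|lborel. pd f Y w * cnj (pd f X w))"
    by (simp add: by_parts)
  also have "\<dots> = (LINT w|lborel. cnj (pd f X w * cnj (pd f Y w)))"
    by (simp add: mult.commute)
  also have "\<dots> = cnj (LINT w|lborel. pd f X w * cnj (pd f Y w))"
    by (rule Bochner_Integration.integral_cnj)
  finally have "Im (LINT w|lborel. pd f X w * cnj (pd f Y w)) = 0"
    by (simp add: complex_eq_iff)
  moreover have "integrable lborel (\<lambda>w. pd f X w * cnj (pd f Y w))"
    using Q(4) pd_eq_0_outside_ball[OF supp]
    by (intro integrable_vanishing_outside_ball[where R = R]) (auto intro!: continuous_intros)
  ultimately show ?thesis by (simp only: integral_Im)
qed

lemma cmod_pd_exp_mult_sq: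
  fixes \<phi> :: "'a::real_normed_vector \<Rightarrow> real" and f :: "'a \<Rightarrow> complex"
  assumes "\<phi> differentiable (at z)" "f differentiable (at z)"
  shows "(cmod ((pd (\<lambda>w. of_real (exp (\<phi> w)) * f w) X z
            + \<i> * pd (\<lambda>w. of_real (exp (\<phi> w)) * f w) Y z) / 2))\<^sup>2 * exp (- 2 * \<phi> z)
     = 1/4 * ((cmod (pd f X z - \<i> * of_real (- pd \<phi> Y z) * f z))\<^sup>2
              + (cmod (pd f Y z - \<i> * of_real (pd \<phi> X z) * f z))\<^sup>2)
       + 1/2 * Im (pd f X z * cnj (pd f Y z))
       + 1/2 * (pd \<phi> X z * Re (pd f X z * cnj (f z))) + 1/2 * (pd \<phi> Y z * Re (pd f Y z * cnj (f z)))"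
proof -
  have "exp (- 2 * \<phi> z) = (inverse (exp (\<phi> z)))\<^sup>2"
    by (simp add: power2_eq_square flip: exp_minus exp_add)
  then show ?thesis
    unfolding pd_exp_mult[OF assms] cmod_power2
    by (simp add: field_simps power2_eq_square; algebra)
qed

lemma integral_cmod_pd_exp_mult_sq:
  fixes \<phi> :: "complex^'n::finite \<Rightarrow> real" and f :: "complex^'n \<Rightarrow> complex"
  assumes "C2 \<phi>" and "C2 f" and supp: "\<And>w. norm w > R \<Longrightarrow> f w = 0"
  shows "(LINT z|lborel. (cmod ((pd (\<lambda>w. of_real (exp (\<phi> w)) * f w) X z
            + \<i> * pd (\<lambda>w. of_real (exp (\<phi> w)) * f w) Y z) / 2))\<^sup>2 * exp (- 2 * \<phi> z))
     = 1/4 * (LINT z|lborel. (cmod (pd f X z - \<i> * of_real (- pd \<phi> Y z) * f z))\<^sup>2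
              + (cmod (pd f Y z - \<i> * of_real (pd \<phi> X z) * f z))\<^sup>2)
       - 1/4 * (LINT z|lborel. (pd (pd \<phi> X) X z + pd (pd \<phi> Y) Y z) * (cmod (f z))\<^sup>2)"
proof -
  note P = C2_D[OF assms(1)] and Q = C2_D[OF assms(2)]
  have "integrable lborel (\<lambda>z. (cmod (pd f X z - \<i> * of_real (- pd \<phi> Y z) * f z))\<^sup>2
              + (cmod (pd f Y z - \<i> * of_real (pd \<phi> X z) * f z))\<^sup>2)"
    "integrable lborel (\<lambda>z. Im (pd f X z * cnj (pd f Y z)))"
    "integrable lborel (\<lambda>z. pd \<phi> V z * Re (pd f V z * cnj (f z)))"
    "integrable lborel (\<lambda>z. pd (pd \<phi> V) V z * (cmod (f z))\<^sup>2)" for V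
    using P Q by (auto intro!: integrable_vanishing_outside_ball[where R = R] continuous_intros
        simp: supp pd_eq_0_outside_ball[OF supp])
  moreover note integral_pd_mult_Re_pd_cnj[where R = R, OF assms, where v = X]
    integral_pd_mult_Re_pd_cnj[where R = R, OF assms, where v = Y]
    integral_Im_pd_cnj_pd_eq_0[where R = R, OF assms(2) supp, where X = X and Y = Y]
  ultimately show ?thesis
    by (simp only: cmod_pd_exp_mult_sq P(1) Q(1)) (simp add: distrib_right; simp add: field_simps)
qed

theorem mainTheorem16:
  fixes \<phi> :: "complex^'n::finite \<Rightarrow> real" and f :: "complex^'n \<Rightarrow> complex"
  assumes "C2 \<phi>" and "C2 f" and "has_compact_support f"
  shows "(\<Sum>j\<in>UNIV. (LINT z|lborel.
            (cmod (dbar j (\<lambda>w. of_real (exp (\<phi> w)) * f w) z))\<^sup>2 * exp (- 2 * \<phi> z)))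
       = 1/4 * (LINT z|lborel. mag_grad_sq (nabla_perp \<phi>) f z)
         - 1/4 * (LINT z|lborel. laplacian \<phi> z * (cmod (f z))\<^sup>2)"
proof -
  obtain R where supp: "\<And>w. norm w > R \<Longrightarrow> f w = 0"
    using has_compact_support_obtain_radius[OF assms(3)] by blast
  note P = C2_D[OF assms(1)] and Q = C2_D[OF assms(2)]
  define M where "M j z = (cmod (pd f (dx j) z - \<i> * of_real (- pd \<phi> (dy j) z) * f z))\<^sup>2
      + (cmod (pd f (dy j) z - \<i> * of_real (pd \<phi> (dx j) z) * f z))\<^sup>2" for j z
  define lap where "lap j z = (pd (pd \<phi> (dx j)) (dx j) z + pd (pd \<phi> (dy j)) (dy j) z) * (cmod (f z))\<^sup>2"
    for j z
  have "integrable lborel (M j)" "integrable lborel (lap j)" for j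
    unfolding M_def lap_def using P Q pd_eq_0_outside_ball[OF supp]
    by (auto intro!: integrable_vanishing_outside_ball[where R = R] continuous_intros simp: supp)
  moreover have "(\<Sum>j\<in>UNIV. (LINT z|lborel.
            (cmod (dbar j (\<lambda>w. of_real (exp (\<phi> w)) * f w) z))\<^sup>2 * exp (- 2 * \<phi> z)))
      = (\<Sum>j\<in>UNIV. 1/4 * (LINT z|lborel. M j z) - 1/4 * (LINT z|lborel. lap j z))"
    unfolding dbar_def M_def lap_def
    by (intro sum.cong refl integral_cmod_pd_exp_mult_sq[OF assms(1,2) supp])
  ultimately have "(\<Sum>j\<in>UNIV. (LINT z|lborel.
            (cmod (dbar j (\<lambda>w. of_real (exp (\<phi> w)) * f w) z))\<^sup>2 * exp (- 2 * \<phi> z)))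
      = 1/4 * (LINT z|lborel. (\<Sum>j\<in>UNIV. M j z)) - 1/4 * (LINT z|lborel. (\<Sum>j\<in>UNIV. lap j z))"
    by (simp add: sum_subtractf sum_distrib_left)
  also have "\<dots> = 1/4 * (LINT z|lborel. mag_grad_sq (nabla_perp \<phi>) f z)
         - 1/4 * (LINT z|lborel. laplacian \<phi> z * (cmod (f z))\<^sup>2)"
    by (simp add: M_def lap_def mag_grad_sq_def nabla_perp_def laplacian_def sum_distrib_right)
  finally show ?thesis .
qed

end
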